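(* Let $A\in\mathbb{Z}^{d\times n}$ be totally unimodular, $\mathbf{b}\in\mathbb{Z}^d$, $\mathbf{c}\in\mathbb{Z}^n$, $\mathbf{u}\in\mathbb{Z}_{\ge0}^n$. Then from any feasible solution of $\min\{\mathbf{c}^\top\mathbf{x} : A\mathbf{x}=\mathbf{b},\ \mathbf{0}\le\mathbf{x}\le\mathbf{u},\ \mathbf{x}\in\mathbb{Z}^n\}$, every sequence of discrete steepest-descent augmentations reaches an optimal solution after at most $n(d+1)\|\mathbf{c}\|_1$ augmentations.
   Context: For $\mathbf{v},\mathbf{w}\in\mathbb{R}^n$ write $\mathbf{v}\sqsubseteq\mathbf{w}$ if $v_iw_i\ge0$ and $|v_i|\le|w_i|$ for all $i$; the Graver basis $\mathcal{G}(A)$ is the set of $\sqsubseteq$-minimal elements of $(\ker(A)\cap\mathbb{Z}^n)\setminus\{\mathbf{0}\}$. Discrete steepest-descent augmentation (ILP): given a feasible $\mathbf{x}_k$, choose $\mathbf{z}\in\mathcal{G}(A)$ maximizing $-\mathbf{c}^\top\mathbf{z}/\|\mathbf{z}\|_1$ among all $\mathbf{z}\in\mathcal{G}(A)$ with $\mathbf{x}_k+\mathbf{z}$ feasible; if this maximum is positive, let $\alpha$ be the largest integer with $\mathbf{x}_k+\alpha\mathbf{z}$ feasible and set $\mathbf{x}_{k+1}:=\mathbf{x}_k+\alpha\mathbf{z}$, otherwise stop. *)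

theory Defs
  imports Complex_Main "Jordan_Normal_Form.Determinant" "Jordan_Normal_Form.DL_Submatrix"
begin

(* A is d x n with d = dim_row A, n = dim_col A. *)

definition totally_unimodular :: "int mat \<Rightarrow> bool" where
  "totally_unimodular A \<longleftrightarrow>
     (\<forall>I J. I \<subseteq> {..<dim_row A} \<longrightarrow> J \<subseteq> {..<dim_col A} \<longrightarrow> card I = card J \<longrightarrow>
        det (submatrix A I J) \<in> {-1, 0, 1})"

definition conf_le :: "int vec \<Rightarrow> int vec \<Rightarrow> bool" (infix "\<sqsubseteq>" 50) where
  "v \<sqsubseteq> w \<longleftrightarrow> dim_vec v = dim_vec w \<and>
     (\<forall>i<dim_vec v. v $ i * w $ i \<ge> 0 \<and> \<bar>v $ i\<bar> \<le> \<bar>w $ i\<bar>)"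

definition int_kernel :: "int mat \<Rightarrow> int vec set" where
  "int_kernel A = {z. z \<in> carrier_vec (dim_col A) \<and> A *\<^sub>v z = 0\<^sub>v (dim_row A)}"

definition graver :: "int mat \<Rightarrow> int vec set" where
  "graver A = {z \<in> int_kernel A - {0\<^sub>v (dim_col A)}.
      \<not> (\<exists>y \<in> int_kernel A - {0\<^sub>v (dim_col A)}. y \<sqsubseteq> z \<and> y \<noteq> z)}"

definition feasible :: "int mat \<Rightarrow> int vec \<Rightarrow> int vec \<Rightarrow> int vec \<Rightarrow> bool" where
  "feasible A b u x \<longleftrightarrow> x \<in> carrier_vec (dim_col A) \<and> A *\<^sub>v x = b \<and>
     (\<forall>i<dim_col A. 0 \<le> x $ i \<and> x $ i \<le> u $ i)"

definition norm1 :: "int vec \<Rightarrow> int" where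
  "norm1 v = (\<Sum>i<dim_vec v. \<bar>v $ i\<bar>)"

definition ratio :: "int vec \<Rightarrow> int vec \<Rightarrow> real" where
  "ratio c z = - real_of_int (c \<bullet> z) / real_of_int (norm1 z)"

definition sd_step :: "int mat \<Rightarrow> int vec \<Rightarrow> int vec \<Rightarrow> int vec \<Rightarrow> int vec \<Rightarrow> int vec \<Rightarrow> bool" where
  "sd_step A b c u x x' \<longleftrightarrow>
     (\<exists>z \<alpha>. z \<in> graver A \<and> feasible A b u (x + z) \<and>
        (\<forall>z' \<in> graver A. feasible A b u (x + z') \<longrightarrow> ratio c z' \<le> ratio c z) \<and>
        ratio c z > 0 \<and>
        feasible A b u (x + \<alpha> \<cdot>\<^sub>v z) \<and>
        (\<forall>\<beta>::int. feasible A b u (x + \<beta> \<cdot>\<^sub>v z) \<longrightarrow> \<beta> \<le> \<alpha>) \<and>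
        x' = x + \<alpha> \<cdot>\<^sub>v z)"

definition sd_stops :: "int mat \<Rightarrow> int vec \<Rightarrow> int vec \<Rightarrow> int vec \<Rightarrow> int vec \<Rightarrow> bool" where
  "sd_stops A b c u x \<longleftrightarrow>
     \<not> (\<exists>z \<in> graver A. feasible A b u (x + z) \<and> ratio c z > 0)"

definition optimal :: "int mat \<Rightarrow> int vec \<Rightarrow> int vec \<Rightarrow> int vec \<Rightarrow> int vec \<Rightarrow> bool" where
  "optimal A b c u x \<longleftrightarrow> feasible A b u x \<and> (\<forall>y. feasible A b u y \<longrightarrow> c \<bullet> x \<le> c \<bullet> y)"

end

theory Submission
  imports Defs
begin

(*
  The proof combines three independent facts.
  (1) Conformal decomposition: every kernel vector is a conformal sum of Graver elements, so a
      bound -c.g <= r |g|_1 valid for all Graver elements g conformal to a kernel vector w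
      holds for w as well.  With r = 0 this shows that a point where the augmentation stops
      is optimal.
  (2) Graver elements of a totally unimodular d x n matrix are {-1,0,1}-vectors with at most
      d + 1 nonzero entries: below every kernel vector lies a conformal circuit, built from
      the cofactors of a maximal nonsingular submatrix (Cramer's rule).
  (3) Along a run, the ratios -c.z_k / |z_k|_1 never increase, every step saturates a bound in
      some coordinate, and while the ratio stays constant a saturated coordinate is not moved
      again.  So the pair (ratio, saturated coordinate) determines the step; by (2) the ratios
      are fractions p / q with 1 <= p <= |c|_1 and 1 <= q <= d + 1, whence the bound.
*)

section \<open>Conformal order, Graver elements and optimality\<close>

text \<open>For integers, conformality \<open>a \<sqsubseteq> b\<close> means that \<open>a\<close> lies between \<open>0\<close> and \<open>b\<close>;
  this turns all coordinatewise reasoning about \<open>\<sqsubseteq>\<close> into linear arithmetic.\<close>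
lemma conformal_int_iff:
  fixes a b :: int
  shows "(0 \<le> a * b \<and> \<bar>a\<bar> \<le> \<bar>b\<bar>) \<longleftrightarrow> (0 \<le> a \<and> a \<le> b) \<or> (b \<le> a \<and> a \<le> 0)"
  by (cases "0 \<le> a"; cases "0 \<le> b") (auto simp: zero_le_mult_iff)

lemma conf_le_iff:
  "v \<sqsubseteq> w \<longleftrightarrow> dim_vec v = dim_vec w \<and>
     (\<forall>i<dim_vec w. (0 \<le> v $ i \<and> v $ i \<le> w $ i) \<or> (w $ i \<le> v $ i \<and> v $ i \<le> 0))"
  unfolding conf_le_def conformal_int_iff by auto

lemma conf_le_refl: "v \<sqsubseteq> v"
  by (auto simp: conf_le_iff)

lemma conf_le_trans: "x \<sqsubseteq> y \<Longrightarrow> y \<sqsubseteq> z \<Longrightarrow> x \<sqsubseteq> z"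
  unfolding conf_le_iff by (metis order_trans)

lemma norm1_nonneg: "0 \<le> norm1 v"
  by (auto simp: norm1_def intro: sum_nonneg)

lemma norm1_pos:
  assumes "v \<in> carrier_vec n" "v \<noteq> 0\<^sub>v n"
  shows "0 < norm1 v"
proof -
  obtain i where "i < n" "v $ i \<noteq> 0"
    using assms by (metis eq_vecI carrier_vecD index_zero_vec)
  then have "0 < (\<Sum>j<n. \<bar>v $ j\<bar>)" by (intro sum_pos2[of _ i]) auto
  then show ?thesis using assms by (simp add: norm1_def)
qed

lemma norm1_add_le: "dim_vec v = dim_vec w \<Longrightarrow> norm1 (v + w) \<le> norm1 v + norm1 w"
  unfolding norm1_def by (simp add: sum.distrib[symmetric] abs_triangle_ineq sum_mono)

lemma norm1_smult: "norm1 (a \<cdot>\<^sub>v v) = \<bar>a\<bar> * norm1 v"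
  unfolding norm1_def by (simp add: sum_distrib_left abs_mult)

lemma conf_le_norm1_less:
  assumes "y \<sqsubseteq> w" "y \<noteq> w"
  shows "norm1 y < norm1 w"
proof -
  have dim: "dim_vec y = dim_vec w" and coord: "\<And>j. j < dim_vec w \<Longrightarrow> \<bar>y $ j\<bar> \<le> \<bar>w $ j\<bar>"
    using assms(1) by (auto simp: conf_le_def)
  obtain i where i: "i < dim_vec w" "y $ i \<noteq> w $ i"
    using assms dim by (metis eq_vecI)
  have "\<bar>y $ i\<bar> < \<bar>w $ i\<bar>" using assms(1) i by (auto simp: conf_le_iff)
  then have "(\<Sum>j<dim_vec w. \<bar>y $ j\<bar>) < (\<Sum>j<dim_vec w. \<bar>w $ j\<bar>)"
    using coord i by (intro sum_strict_mono_ex1) auto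
  then show ?thesis using dim by (simp add: norm1_def)
qed

lemma conf_le_diff:
  assumes "g \<sqsubseteq> w"
  shows "w - g \<sqsubseteq> w" and "norm1 (w - g) = norm1 w - norm1 g"
proof -
  have dim: "dim_vec g = dim_vec w"
    and coord: "\<And>j. j < dim_vec w \<Longrightarrow> (0 \<le> g $ j \<and> g $ j \<le> w $ j) \<or> (w $ j \<le> g $ j \<and> g $ j \<le> 0)"
    using assms by (auto simp: conf_le_iff)
  show "w - g \<sqsubseteq> w" using coord dim by (auto simp: conf_le_iff)
  have "norm1 (w - g) = (\<Sum>j<dim_vec w. \<bar>w $ j\<bar> - \<bar>g $ j\<bar>)"
    using coord dim unfolding norm1_def by (intro sum.cong) (fastforce simp: abs_if)+
  also have "\<dots> = norm1 w - norm1 g" using dim by (simp add: norm1_def sum_subtractf)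
  finally show "norm1 (w - g) = norm1 w - norm1 g" .
qed

lemma int_kernel_diff:
  assumes "w \<in> int_kernel A" "g \<in> int_kernel A"
  shows "w - g \<in> int_kernel A"
proof -
  have "A *\<^sub>v (w - g) = A *\<^sub>v w - A *\<^sub>v g"
    using assms by (intro mult_minus_distrib_mat_vec) (auto simp: int_kernel_def)
  then show ?thesis using assms by (auto simp: int_kernel_def)
qed

lemma int_kernel_add:
  assumes "w \<in> int_kernel A" "g \<in> int_kernel A"
  shows "w + g \<in> int_kernel A"
proof -
  have "A *\<^sub>v (w + g) = A *\<^sub>v w + A *\<^sub>v g"
    using assms by (intro mult_add_distrib_mat_vec) (auto simp: int_kernel_def)
  then show ?thesis using assms by (auto simp: int_kernel_def)
qed

lemma int_kernel_smult:
  assumes "w \<in> int_kernel A"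
  shows "t \<cdot>\<^sub>v w \<in> int_kernel A"
proof -
  have w: "w \<in> carrier_vec (dim_col A)" "A *\<^sub>v w = 0\<^sub>v (dim_row A)"
    using assms by (auto simp: int_kernel_def)
  have "row A i \<bullet> w = 0" if "i < dim_row A" for i
    using w(2) that by (metis index_mult_mat_vec index_zero_vec(1))
  then have "A *\<^sub>v (t \<cdot>\<^sub>v w) = 0\<^sub>v (dim_row A)"
    using w(1) by (intro eq_vecI) (auto simp: scalar_prod_smult_distrib[of _ "dim_col A"])
  then show ?thesis using w(1) by (auto simp: int_kernel_def)
qed

lemma graver_kernel:
  assumes "g \<in> graver A"
  shows "g \<in> int_kernel A" and "g \<noteq> 0\<^sub>v (dim_col A)" and "0 < norm1 g"
proof -
  show "g \<in> int_kernel A" "g \<noteq> 0\<^sub>v (dim_col A)" using assms by (auto simp: graver_def)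
  then show "0 < norm1 g" by (intro norm1_pos) (auto simp: int_kernel_def)
qed

lemma graver_below:
  assumes "w \<in> int_kernel A" "w \<noteq> 0\<^sub>v (dim_col A)"
  shows "\<exists>g\<in>graver A. g \<sqsubseteq> w"
  using assms
proof (induction "nat (norm1 w)" arbitrary: w rule: less_induct)
  case less
  show ?case
  proof (cases "w \<in> graver A")
    case True
    then show ?thesis using conf_le_refl by blast
  next
    case False
    then obtain y where y: "y \<in> int_kernel A" "y \<noteq> 0\<^sub>v (dim_col A)" "y \<sqsubseteq> w" "y \<noteq> w"
      using less.prems unfolding graver_def by blast
    have "nat (norm1 y) < nat (norm1 w)"
      using conf_le_norm1_less[OF y(3,4)] norm1_nonneg[of y] by linarith
    then obtain g where "g \<in> graver A" "g \<sqsubseteq> y" using less.hyps y(1,2) by blast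
    then show ?thesis using conf_le_trans y(3) by blast
  qed
qed

text \<open>Peel off one Graver
  element at a time; cost and 1-norm are additive over conformal sums.\<close>
lemma graver_ratio_bound:
  assumes "w \<in> int_kernel A" "c \<in> carrier_vec (dim_col A)"
    and bound: "\<And>g. g \<in> graver A \<Longrightarrow> g \<sqsubseteq> w \<Longrightarrow> - real_of_int (c \<bullet> g) \<le> r * real_of_int (norm1 g)"
  shows "- real_of_int (c \<bullet> w) \<le> r * real_of_int (norm1 w)"
  using assms(1) bound
proof (induction "nat (norm1 w)" arbitrary: w rule: less_induct)
  case less
  show ?case
  proof (cases "w = 0\<^sub>v (dim_col A)")
    case True
    then show ?thesis using assms(2) by (simp add: norm1_def)
  next
    case False
    obtain g where g: "g \<in> graver A" "g \<sqsubseteq> w"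
      using graver_below[OF less.prems(1) False] by blast
    have gk: "g \<in> int_kernel A" and "0 < norm1 g" using graver_kernel[OF g(1)] by auto
    moreover have rest: "w - g \<sqsubseteq> w" "norm1 (w - g) = norm1 w - norm1 g"
      using conf_le_diff[OF g(2)] by auto
    ultimately have "nat (norm1 (w - g)) < nat (norm1 w)"
      using norm1_nonneg[of "w - g"] by linarith
    then have "- real_of_int (c \<bullet> (w - g)) \<le> r * real_of_int (norm1 (w - g))"
      using less.hyps int_kernel_diff[OF less.prems(1) gk] less.prems(2) conf_le_trans[OF _ rest(1)]
      by blast
    moreover have "- real_of_int (c \<bullet> g) \<le> r * real_of_int (norm1 g)" using less.prems(2) g by blast
    moreover have "c \<bullet> (w - g) = c \<bullet> w - c \<bullet> g"
      using assms(2) gk less.prems(1) by (intro scalar_prod_minus_distrib) (auto simp: int_kernel_def)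
    ultimately show ?thesis using rest(2) by (simp add: algebra_simps)
  qed
qed

text \<open>Conformal parts of feasible moves are feasible moves: coordinatewise, \<open>x + g\<close> lies between
  \<open>x\<close> and \<open>x + w\<close>.\<close>
lemma feasible_conformal:
  assumes x: "feasible A b u x" and w: "feasible A b u (x + w)"
    and g: "g \<sqsubseteq> w" "g \<in> int_kernel A"
  shows "feasible A b u (x + g)"
proof -
  have xc: "x \<in> carrier_vec (dim_col A)" and gc: "g \<in> carrier_vec (dim_col A)"
    using x g by (auto simp: feasible_def int_kernel_def)
  have "A *\<^sub>v (x + g) = A *\<^sub>v x + A *\<^sub>v g" using xc gc by (intro mult_add_distrib_mat_vec) auto
  then have "A *\<^sub>v (x + g) = b" using x g by (auto simp: feasible_def int_kernel_def)
  moreover have "0 \<le> x $ i + g $ i \<and> x $ i + g $ i \<le> u $ i" if i: "i < dim_col A" for i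
  proof -
    have "dim_vec w = dim_col A" using g gc by (auto simp: conf_le_def)
    then have "0 \<le> x $ i" "x $ i \<le> u $ i" "0 \<le> x $ i + w $ i" "x $ i + w $ i \<le> u $ i"
      using x w i by (auto simp: feasible_def)
    moreover have "(0 \<le> g $ i \<and> g $ i \<le> w $ i) \<or> (w $ i \<le> g $ i \<and> g $ i \<le> 0)"
      using g i gc by (auto simp: conf_le_iff)
    ultimately show ?thesis by linarith
  qed
  ultimately show ?thesis using xc gc by (auto simp: feasible_def)
qed

lemma feasible_diff_kernel:
  assumes "feasible A b u x" "feasible A b u y"
  shows "y - x \<in> int_kernel A"
proof -
  have xc: "x \<in> carrier_vec (dim_col A)" and yc: "y \<in> carrier_vec (dim_col A)"
    using assms by (auto simp: feasible_def)
  have "A *\<^sub>v (y - x) = A *\<^sub>v y - A *\<^sub>v x" using xc yc by (intro mult_minus_distrib_mat_vec) auto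
  also have "\<dots> = 0\<^sub>v (dim_row A)" using assms by (auto simp: feasible_def)
  finally show ?thesis using xc yc by (simp add: int_kernel_def)
qed

text \<open>Optimality at termination: if no feasible Graver step improves the cost, then by the
  decomposition bound with \<open>r = 0\<close> no feasible point is cheaper.\<close>
lemma stops_imp_optimal:
  assumes x: "feasible A b u x" and stop: "sd_stops A b c u x" and c: "c \<in> carrier_vec (dim_col A)"
  shows "optimal A b c u x"
  unfolding optimal_def
proof (intro conjI allI impI x)
  fix y assume y: "feasible A b u y"
  have xc: "x \<in> carrier_vec (dim_col A)" and yc: "y \<in> carrier_vec (dim_col A)"
    using x y by (auto simp: feasible_def)
  have "- real_of_int (c \<bullet> g) \<le> 0 * real_of_int (norm1 g)"
    if g: "g \<in> graver A" "g \<sqsubseteq> y - x" for g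
  proof -
    have "x + (y - x) = y" using xc yc by auto
    then have "feasible A b u (x + g)"
      using feasible_conformal[OF x _ g(2)] graver_kernel(1)[OF g(1)] y by simp
    then have "\<not> 0 < ratio c g" using stop g(1) by (auto simp: sd_stops_def)
    then show ?thesis using graver_kernel(3)[OF g(1)] by (simp add: ratio_def divide_less_0_iff)
  qed
  then have "- real_of_int (c \<bullet> (y - x)) \<le> 0"
    using graver_ratio_bound[OF feasible_diff_kernel[OF x y] c, of 0] by simp
  moreover have "c \<bullet> (y - x) = c \<bullet> y - c \<bullet> x" using c xc yc by (intro scalar_prod_minus_distrib) auto
  ultimately show "c \<bullet> x \<le> c \<bullet> y" by simp
qed

section \<open>Graver elements of totally unimodular matrices\<close>

lemma pick_rank:
  assumes "finite S" "x \<in> S"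
  shows "card {a\<in>S. a < x} < card S" and "pick S (card {a\<in>S. a < x}) = x"
  using assms by (auto intro!: psubset_card_mono pick_card_in_set)

lemma pick_bij_betw:
  assumes "finite S"
  shows "bij_betw (pick S) {..<card S} S"
proof (rule bij_betw_imageI)
  show "inj_on (pick S) {..<card S}"
    by (rule strict_mono_on_imp_inj_on) (auto intro!: strict_mono_onI pick_mono)
  show "pick S ` {..<card S} = S"
  proof
    show "pick S ` {..<card S} \<subseteq> S" using pick_in_set by auto
    show "S \<subseteq> pick S ` {..<card S}"
    proof
      fix s assume s: "s \<in> S"
      then show "s \<in> pick S ` {..<card S}" using pick_rank[OF assms s] by force
    qed
  qed
qed

lemma sum_pick:
  assumes "finite J" "J \<subseteq> {..<n}" "\<And>l. l < n \<Longrightarrow> l \<notin> J \<Longrightarrow> f l = 0"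
  shows "(\<Sum>l<n. f l) = (\<Sum>c<card J. f (pick J c))"
proof -
  have "(\<Sum>l<n. f l) = (\<Sum>l\<in>J. f l)" using assms by (intro sum.mono_neutral_right) auto
  also have "\<dots> = (\<Sum>c<card J. f (pick J c))"
    using sum.reindex_bij_betw[OF pick_bij_betw[OF assms(1)], of f] by simp
  finally show ?thesis .
qed

text \<open>Enumerating \<open>J\<close> with its \<open>c\<close>-th element removed skips position \<open>c\<close>; this matches column
  deletion in Laplace expansion.\<close>
lemma pick_delete:
  assumes J: "finite J" and c: "c < card J" and c': "c' < card J - 1"
  shows "pick (J - {pick J c}) c' = pick J (if c' < c then c' else Suc c')"
proof -
  define p where "p = pick J c"
  define e where "e = pick J (if c' < c then c' else Suc c')"
  have idx: "(if c' < c then c' else Suc c') < card J" using c c' by auto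
  have "e \<in> J" using pick_in_set idx by (simp add: e_def)
  moreover have "p \<in> J" using pick_in_set c by (simp add: p_def)
  moreover have "e < p \<longleftrightarrow> c' < c" "e \<noteq> p"
    using pick_mono[of c J c'] pick_mono[of "Suc c'" J c] c idx by (auto simp: e_def p_def)
  moreover have "card {a\<in>J. a < e} = (if c' < c then c' else Suc c')"
    using card_pick idx by (simp add: e_def)
  moreover have "{a\<in>J - {p}. a < e} = (if e < p then {a\<in>J. a < e} else {a\<in>J. a < e} - {p})"
    by auto
  ultimately have "card {a\<in>J - {p}. a < e} = c'" and "e \<in> J - {p}"
    using J by (auto split: if_splits)
  then show ?thesis using pick_card_in_set[of e "J - {p}"] by (simp add: p_def e_def)
qed

lemma submatrix_carrier:
  assumes "I \<subseteq> {..<dim_row A}" "J \<subseteq> {..<dim_col A}"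
  shows "submatrix A I J \<in> carrier_mat (card I) (card J)"
proof -
  have "{i. i < dim_row A \<and> i \<in> I} = I" "{j. j < dim_col A \<and> j \<in> J} = J" using assms by blast+
  then show ?thesis unfolding carrier_mat_def using dim_submatrix[of A I J] by simp
qed

lemma submatrix_entry:
  assumes "I \<subseteq> {..<dim_row A}" "J \<subseteq> {..<dim_col A}" "r < card I" "c < card J"
  shows "submatrix A I J $$ (r, c) = A $$ (pick I r, pick J c)"
proof -
  have "{i. i < dim_row A \<and> i \<in> I} = I" "{j. j < dim_col A \<and> j \<in> J} = J" using assms by blast+
  then show ?thesis using assms by (intro submatrix_index) simp_all
qed

lemma mult_mat_vec_entry:
  assumes "M \<in> carrier_mat m k" "y \<in> carrier_vec k" "r < m"
  shows "(M *\<^sub>v y) $ r = (\<Sum>c<k. M $$ (r, c) * y $ c)"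
  using assms by (simp add: scalar_prod_def atLeast0LessThan)

text \<open>A square matrix all of whose rows are rows of a singular square matrix is singular:
  a kernel vector of the latter is a kernel vector of the former.\<close>
lemma det_zero_if_rows_of_singular:
  fixes B M :: "'a :: idom mat"
  assumes B: "B \<in> carrier_mat k k" and M: "M \<in> carrier_mat k k" and "det M = 0"
    and rows: "\<And>r. r < k \<Longrightarrow> \<exists>r'<k. row B r = row M r'"
  shows "det B = 0"
proof -
  obtain y where y: "y \<in> carrier_vec k" "y \<noteq> 0\<^sub>v k" "M *\<^sub>v y = 0\<^sub>v k"
    using det_0_iff_vec_prod_zero[OF M] \<open>det M = 0\<close> by blast
  have "B *\<^sub>v y = 0\<^sub>v k"
  proof (rule eq_vecI)
    fix r assume "r < dim_vec (0\<^sub>v k :: 'a vec)"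
    then obtain r' where "r < k" "r' < k" "row B r = row M r'" using rows by auto
    then show "(B *\<^sub>v y) $ r = 0\<^sub>v k $ r"
      using B M y(3) by (metis carrier_matD(1) index_mult_mat_vec index_zero_vec(1))
  qed (use B in simp)
  then show ?thesis using det_0_iff_vec_prod_zero[OF B] y(1,2) by blast
qed

definition bordered_submatrix :: "'a mat \<Rightarrow> nat \<Rightarrow> nat set \<Rightarrow> nat set \<Rightarrow> 'a mat" where
  "bordered_submatrix A i I J =
     mat (Suc (card I)) (card J) (\<lambda>(r, c). A $$ (if r = 0 then i else pick I (r - 1), pick J c))"

text \<open>The signed maximal minors of the submatrix with rows \<open>I\<close> and columns \<open>J\<close>, placed
  at the columns in \<open>J\<close> (Cramer's rule); it lies in the kernel of every row whose bordered
  submatrix is singular.\<close>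
definition cofactor_vec :: "'a :: comm_ring_1 mat \<Rightarrow> nat set \<Rightarrow> nat set \<Rightarrow> 'a vec" where
  "cofactor_vec A I J = vec (dim_col A) (\<lambda>l.
     if l \<in> J then (-1) ^ card {a\<in>J. a < l} * det (submatrix A I (J - {l})) else 0)"

lemma bordered_submatrix_minor:
  assumes I: "I \<subseteq> {..<dim_row A}" and J: "J \<subseteq> {..<dim_col A}" and card: "card J = Suc (card I)"
    and c: "c < card J"
  shows "mat_delete (bordered_submatrix A i I J) 0 c = submatrix A I (J - {pick J c})"
proof -
  have fin: "finite J" using J finite_subset by blast
  have J': "J - {pick J c} \<subseteq> {..<dim_col A}" "card (J - {pick J c}) = card I"
    using J card c pick_in_set[of c J] fin by auto
  show ?thesis
  proof (rule eq_matI)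
    fix r c' assume "r < dim_row (submatrix A I (J - {pick J c}))"
      "c' < dim_col (submatrix A I (J - {pick J c}))"
    then have r: "r < card I" and c': "c' < card I"
      using submatrix_carrier[OF I J'(1)] J'(2) by auto
    then have "mat_delete (bordered_submatrix A i I J) 0 c $$ (r, c')
        = A $$ (pick I r, pick J (if c' < c then c' else Suc c'))"
      using c card by (auto simp: mat_delete_def bordered_submatrix_def)
    also have "\<dots> = submatrix A I (J - {pick J c}) $$ (r, c')"
      using pick_delete[OF fin c, of c'] submatrix_entry[OF I J'(1)] r c' card J'(2) by simp
    finally show "mat_delete (bordered_submatrix A i I J) 0 c $$ (r, c') =
        submatrix A I (J - {pick J c}) $$ (r, c')" .
  qed (use submatrix_carrier[OF I J'(1)] J' card c in \<open>auto simp: bordered_submatrix_def\<close>)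
qed

text \<open>Laplace expansion along the top row: row \<open>i\<close> of \<open>A\<close> applied to the cofactor vector is the
  determinant of the bordered submatrix.\<close>
lemma cofactor_vec_row:
  fixes A :: "'a :: comm_ring_1 mat"
  assumes I: "I \<subseteq> {..<dim_row A}" and J: "J \<subseteq> {..<dim_col A}" and card: "card J = Suc (card I)"
    and i: "i < dim_row A"
  shows "(A *\<^sub>v cofactor_vec A I J) $ i = det (bordered_submatrix A i I J)"
proof -
  define B where "B = bordered_submatrix A i I J"
  define w where "w = cofactor_vec A I J"
  have B: "B \<in> carrier_mat (card J) (card J)" using card by (simp add: B_def bordered_submatrix_def)
  have fin: "finite J" using J finite_subset by blast
  have "(A *\<^sub>v w) $ i = (\<Sum>l<dim_col A. A $$ (i, l) * w $ l)"
    using i by (intro mult_mat_vec_entry) (auto simp: w_def cofactor_vec_def)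
  also have "\<dots> = (\<Sum>c<card J. A $$ (i, pick J c) * w $ pick J c)"
    using J fin by (intro sum_pick) (auto simp: w_def cofactor_vec_def)
  also have "\<dots> = (\<Sum>c<card J. B $$ (0, c) * cofactor B 0 c)"
  proof (rule sum.cong[OF refl])
    fix c assume "c \<in> {..<card J}"
    then have c: "c < card J" by simp
    then have "pick J c \<in> J" "card {a\<in>J. a < pick J c} = c" using pick_in_set card_pick by auto
    then show "A $$ (i, pick J c) * w $ pick J c = B $$ (0, c) * cofactor B 0 c"
      using J c bordered_submatrix_minor[OF I J card c, of i] card
      by (auto simp: w_def cofactor_vec_def B_def cofactor_def bordered_submatrix_def)
  qed
  also have "\<dots> = det B" using laplace_expansion_row[OF B, of 0] card by (simp del: sum.lessThan_Suc)
  finally show ?thesis by (simp add: B_def w_def)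
qed

text \<open>The bordered submatrix is singular if its top row repeats a row of \<open>I\<close>, or if the
  submatrix with rows \<open>insert i I\<close> (which has the same rows) is singular.\<close>
lemma bordered_submatrix_singular:
  fixes A :: "'a :: idom mat"
  assumes I: "I \<subseteq> {..<dim_row A}" and J: "J \<subseteq> {..<dim_col A}" and card: "card J = Suc (card I)"
    and i: "i < dim_row A" and sing: "i \<in> I \<or> det (submatrix A (insert i I) J) = 0"
  shows "det (bordered_submatrix A i I J) = 0"
proof -
  define B where "B = bordered_submatrix A i I J"
  have B: "B \<in> carrier_mat (Suc (card I)) (Suc (card I))"
    using card by (simp add: B_def bordered_submatrix_def)
  have finI: "finite I" using I finite_subset by blast
  have rowB: "row B r = vec (card J) (\<lambda>c. A $$ (if r = 0 then i else pick I (r - 1), pick J c))"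
    if "r < Suc (card I)" for r
    using that card by (auto simp: B_def bordered_submatrix_def)
  show ?thesis
  proof (cases "i \<in> I")
    case True
    define r0 where "r0 = card {a\<in>I. a < i}"
    have "r0 < card I" "pick I r0 = i" unfolding r0_def using pick_rank[OF finI True] by auto
    then have "row B 0 = row B (Suc r0)" by (simp add: rowB)
    then show ?thesis using det_identical_rows[OF B, of 0 "Suc r0"] \<open>r0 < card I\<close> by (simp add: B_def)
  next
    case False
    define M where "M = submatrix A (insert i I) J"
    have I': "insert i I \<subseteq> {..<dim_row A}" "card (insert i I) = Suc (card I)"
      using I i False finI by auto
    have M: "M \<in> carrier_mat (Suc (card I)) (Suc (card I))"
      using submatrix_carrier[OF I'(1) J] I'(2) card by (simp add: M_def)
    have "\<exists>r'<Suc (card I). row B r = row M r'" if r: "r < Suc (card I)" for r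
    proof -
      define \<rho> where "\<rho> = (if r = 0 then i else pick I (r - 1))"
      have "\<rho> \<in> insert i I" using pick_in_set[OF disjI1, of "r - 1" I] r by (auto simp: \<rho>_def)
      then have r': "card {a\<in>insert i I. a < \<rho>} < Suc (card I)"
        "pick (insert i I) (card {a\<in>insert i I. a < \<rho>}) = \<rho>"
        using pick_rank[of "insert i I" \<rho>] I'(2) finI by auto
      have "row B r = row M (card {a\<in>insert i I. a < \<rho>})"
      proof (rule eq_vecI)
        fix c assume "c < dim_vec (row M (card {a\<in>insert i I. a < \<rho>}))"
        then show "row B r $ c = row M (card {a\<in>insert i I. a < \<rho>}) $ c"
          using r r' M card submatrix_entry[OF I'(1) J] I'(2) by (auto simp: rowB M_def \<rho>_def)
      qed (use r M card in \<open>simp add: rowB\<close>)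
      then show ?thesis using r' by blast
    qed
    then show ?thesis
      using det_zero_if_rows_of_singular[OF B M] sing False by (simp add: B_def M_def)
  qed
qed

definition support :: "'a :: zero vec \<Rightarrow> nat set" where
  "support v = {i. i < dim_vec v \<and> v $ i \<noteq> 0}"

text \<open>The columns in the support of a nonzero kernel vector are linearly dependent, so every
  square submatrix using exactly these columns is singular.\<close>
lemma kernel_support_submatrix_singular:
  fixes A :: "'a :: idom mat"
  assumes z: "z \<in> carrier_vec (dim_col A)" "A *\<^sub>v z = 0\<^sub>v (dim_row A)" "z \<noteq> 0\<^sub>v (dim_col A)"
    and I: "I \<subseteq> {..<dim_row A}" and card: "card I = card (support z)"
  shows "det (submatrix A I (support z)) = 0"
proof -
  define S where "S = support z"
  have S: "S \<subseteq> {..<dim_col A}" "finite S" using z(1) by (auto simp: S_def support_def)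
  have M: "submatrix A I S \<in> carrier_mat (card S) (card S)"
    using submatrix_carrier[OF I S(1)] card by (simp add: S_def)
  define y where "y = vec (card S) (\<lambda>c. z $ pick S c)"
  obtain i where i: "i < dim_col A" "z $ i \<noteq> 0"
    using z(1,3) by (metis eq_vecI carrier_vecD index_zero_vec)
  then have "i \<in> S" using z(1) by (simp add: S_def support_def)
  then have "y $ card {a\<in>S. a < i} \<noteq> 0" "card {a\<in>S. a < i} < card S"
    using pick_rank[OF S(2)] i by (auto simp: y_def)
  then have y0: "y \<noteq> 0\<^sub>v (card S)" by auto
  have "submatrix A I S *\<^sub>v y = 0\<^sub>v (card S)"
  proof (rule eq_vecI)
    fix r assume "r < dim_vec (0\<^sub>v (card S) :: 'a vec)"
    then have r: "r < card I" using card by (simp add: S_def)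
    then have row: "pick I r < dim_row A" using pick_in_set[OF disjI1] I by blast
    have "(submatrix A I S *\<^sub>v y) $ r = (\<Sum>c<card S. submatrix A I S $$ (r, c) * y $ c)"
      using r card by (intro mult_mat_vec_entry[OF M]) (auto simp: y_def S_def)
    also have "\<dots> = (\<Sum>c<card S. A $$ (pick I r, pick S c) * z $ pick S c)"
      using submatrix_entry[OF I S(1) r] by (simp add: y_def)
    also have "\<dots> = (\<Sum>l<dim_col A. A $$ (pick I r, l) * z $ l)"
      using S z(1) by (intro sum_pick[symmetric]) (auto simp: S_def support_def)
    also have "\<dots> = (A *\<^sub>v z) $ pick I r"
      using z(1) row by (intro mult_mat_vec_entry[symmetric]) auto
    finally show "(submatrix A I S *\<^sub>v y) $ r = 0\<^sub>v (card S) $ r"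
      using z(2) row r card by (simp add: S_def)
  qed (use M in simp)
  moreover have "y \<in> carrier_vec (card S)" by (simp add: y_def)
  ultimately show ?thesis using det_0_iff_vec_prod_zero[OF M] y0 unfolding S_def by blast
qed

lemma cofactor_vec_kernel:
  fixes A :: "'a :: idom mat"
  assumes I: "I \<subseteq> {..<dim_row A}" and J: "J \<subseteq> {..<dim_col A}" and card: "card J = Suc (card I)"
    and sing: "\<And>i. i < dim_row A \<Longrightarrow> i \<in> I \<or> det (submatrix A (insert i I) J) = 0"
  shows "A *\<^sub>v cofactor_vec A I J = 0\<^sub>v (dim_row A)"
proof (rule eq_vecI)
  fix i assume "i < dim_vec (0\<^sub>v (dim_row A) :: 'a vec)"
  then have i: "i < dim_row A" by simp
  show "(A *\<^sub>v cofactor_vec A I J) $ i = 0\<^sub>v (dim_row A) $ i"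
    using cofactor_vec_row[OF I J card i] bordered_submatrix_singular[OF I J card i sing[OF i]] i
    by simp
qed simp

text \<open>Among the nonsingular square submatrices with columns in \<open>S\<close> there is one with the
  largest number of columns (the empty submatrix is nonsingular).\<close>
lemma maximal_nonsingular_submatrix:
  fixes A :: "'a :: idom mat"
  shows "\<exists>I J. I \<subseteq> {..<dim_row A} \<and> J \<subseteq> S \<and> card I = card J \<and> det (submatrix A I J) \<noteq> 0 \<and>
    (\<forall>I' J'. I' \<subseteq> {..<dim_row A} \<and> J' \<subseteq> S \<and> card I' = card J' \<and> det (submatrix A I' J') \<noteq> 0
       \<longrightarrow> card J' \<le> card J)"
proof -
  define P where "P = (\<lambda>(I, J). I \<subseteq> {..<dim_row A} \<and> J \<subseteq> S \<and> card I = card J \<and>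
    det (submatrix A I J) \<noteq> 0)"
  have "P ({}, {})" using submatrix_carrier[of "{}" A "{}"] by (simp add: P_def)
  moreover have "(card \<circ> snd) IJ < dim_row A + 1" if "P IJ" for IJ
  proof (cases IJ)
    case (Pair I J)
    then have "card I = card J" "I \<subseteq> {..<dim_row A}" using that by (auto simp: P_def)
    then show ?thesis using card_mono[of "{..<dim_row A}" I] Pair by simp
  qed
  ultimately obtain IJ where "P IJ" and "\<forall>IJ'. P IJ' \<longrightarrow> card (snd IJ') \<le> card (snd IJ)"
    using Lattices_Big.ex_has_greatest_nat[of P "({}, {})" "card \<circ> snd" "dim_row A + 1"] by auto
  then show ?thesis by (cases IJ) (auto simp: P_def)
qed

text \<open>It is the cofactor vector of a maximal nonsingular square submatrix whose columns lie
  in the support, bordered by one further support column.\<close>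
lemma tu_circuit_below:
  assumes A: "A \<in> carrier_mat d n" and tu: "totally_unimodular A"
    and z: "z \<in> int_kernel A" "z \<noteq> 0\<^sub>v n"
  shows "\<exists>w\<in>int_kernel A. w \<noteq> 0\<^sub>v n \<and> (\<forall>i<n. w $ i \<in> {-1, 0, 1}) \<and>
           support w \<subseteq> support z \<and> card (support w) \<le> d + 1"
proof -
  have zc: "z \<in> carrier_vec n" "A *\<^sub>v z = 0\<^sub>v d" using z A by (auto simp: int_kernel_def)
  define S where "S = support z"
  have S: "S \<subseteq> {..<n}" using zc by (auto simp: S_def support_def)
  define P where "P I J \<longleftrightarrow> I \<subseteq> {..<dim_row A} \<and> J \<subseteq> S \<and> card I = card J \<and>
    det (submatrix A I J) \<noteq> 0" for I J
  obtain I J where PIJ: "P I J" and max: "\<And>I' J'. P I' J' \<Longrightarrow> card J' \<le> card J"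
    using maximal_nonsingular_submatrix[of A S] unfolding P_def by blast
  have I: "I \<subseteq> {..<dim_row A}" and J: "J \<subseteq> S" and card: "card I = card J"
    and nonsing: "det (submatrix A I J) \<noteq> 0" using PIJ by (auto simp: P_def)
  have finI: "finite I" and finJ: "finite J"
    using finite_subset[OF I] finite_subset[OF J] finite_subset[OF S] by auto
  have "\<not> S \<subseteq> J"
  proof
    assume "S \<subseteq> J"
    then have "J = S" using J by blast
    then show False
      using kernel_support_submatrix_singular[of z A I] zc z(2) A I card nonsing by (simp add: S_def)
  qed
  then obtain j where j: "j \<in> S" "j \<notin> J" by blast
  define J' where "J' = insert j J"
  have J': "J' \<subseteq> {..<dim_col A}" "J' \<subseteq> S" "card J' = Suc (card I)"
    using j J S A card finJ by (auto simp: J'_def)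
  define w where "w = cofactor_vec A I J'"
  have wc: "w \<in> carrier_vec n" using A by (simp add: w_def cofactor_vec_def)
  have "i \<in> I \<or> det (submatrix A (insert i I) J') = 0" if i: "i < dim_row A" for i
  proof (rule ccontr)
    assume "\<not> ?thesis"
    then have "P (insert i I) J'" using I J' i finI by (auto simp: P_def)
    then show False using max[of "insert i I" J'] J'(3) card by simp
  qed
  then have "A *\<^sub>v w = 0\<^sub>v d"
    using cofactor_vec_kernel[OF I J'(1,3)] A by (simp add: w_def)
  then have kernel: "w \<in> int_kernel A" using wc A by (simp add: int_kernel_def)
  have unit: "w $ l \<in> {-1, 0, 1}" if "l < n" for l
  proof (cases "l \<in> J'")
    case True
    have "card (J' - {l}) = card I" using True J'(3) finJ by (simp add: J'_def)
    moreover have "J' - {l} \<subseteq> {..<dim_col A}" using J'(1) by blast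
    ultimately have "det (submatrix A I (J' - {l})) \<in> {-1, 0, 1}"
      using tu I unfolding totally_unimodular_def by simp
    moreover have "(-1 :: int) ^ card {a\<in>J'. a < l} \<in> {-1, 1}" by (simp add: minus_one_power_iff)
    ultimately show ?thesis using that True A by (auto simp: w_def cofactor_vec_def)
  qed (use that A in \<open>simp add: w_def cofactor_vec_def\<close>)
  have "J' - {j} = J" using j by (auto simp: J'_def)
  then have "w $ j \<noteq> 0" using j S nonsing A by (auto simp: w_def cofactor_vec_def J'_def)
  then have "w \<noteq> 0\<^sub>v n" using j S by auto
  moreover have supp: "support w \<subseteq> J'"
    using A by (auto simp: support_def w_def cofactor_vec_def split: if_splits)
  moreover have "card (support w) \<le> d + 1"
    using card_mono[OF _ supp] finJ J'(3) I A card_mono[of "{..<d}" I] by (simp add: J'_def)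
  ultimately show ?thesis using kernel unit J'(2) by (auto simp: S_def)
qed

lemma unit_shift_coord:
  fixes w z t :: int
  assumes "w \<in> {-1, 0, 1}" "z = 0 \<longrightarrow> w = 0" "1 \<le> t" "0 < w * z \<longrightarrow> t \<le> \<bar>z\<bar>"
  shows "z - t * w = 0 \<or> 0 < (z - t * w) * z" and "0 < w * z \<Longrightarrow> \<bar>z\<bar> = t \<Longrightarrow> z - t * w = 0"
  using assms by (auto simp: zero_less_mult_iff)

lemma unit_conformal_transfer:
  fixes v z' z :: int
  assumes "v \<in> {-1, 0, 1}" "0 \<le> v * z'" "\<bar>v\<bar> \<le> \<bar>z'\<bar>" "z' = 0 \<or> 0 < z' * z"
  shows "0 \<le> v * z \<and> \<bar>v\<bar> \<le> \<bar>z\<bar>"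
  using assms by (auto simp: zero_less_mult_iff zero_le_mult_iff)

text \<open>Replacing the circuit by its negative if necessary, it agrees in sign with \<open>z\<close> somewhere.\<close>
lemma tu_circuit_agreeing:
  assumes A: "A \<in> carrier_mat d n" and tu: "totally_unimodular A"
    and z: "z \<in> int_kernel A" "z \<noteq> 0\<^sub>v n"
  shows "\<exists>w\<in>int_kernel A. w \<noteq> 0\<^sub>v n \<and> (\<forall>i<n. w $ i \<in> {-1, 0, 1}) \<and>
           support w \<subseteq> support z \<and> card (support w) \<le> d + 1 \<and> (\<exists>m<n. 0 < w $ m * z $ m)"
proof -
  obtain w0 where w0: "w0 \<in> int_kernel A" "w0 \<noteq> 0\<^sub>v n" "\<forall>i<n. w0 $ i \<in> {-1, 0, 1}"
    "support w0 \<subseteq> support z" "card (support w0) \<le> d + 1"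
    using tu_circuit_below[OF A tu z] by blast
  have w0c: "w0 \<in> carrier_vec n" and zc: "z \<in> carrier_vec n"
    using w0(1) z(1) A by (auto simp: int_kernel_def)
  obtain m where m: "m < n" "w0 $ m \<noteq> 0"
    using w0(2) w0c by (metis eq_vecI carrier_vecD index_zero_vec)
  then have "z $ m \<noteq> 0" using w0(4) w0c zc by (auto simp: support_def)
  define w where "w = (if 0 < w0 $ m * z $ m then w0 else 0\<^sub>v n - w0)"
  have wi: "w $ i = (if 0 < w0 $ m * z $ m then w0 $ i else - w0 $ i)" if "i < n" for i
    using that w0c by (simp add: w_def)
  have wc: "w \<in> carrier_vec n" using w0c by (simp add: w_def)
  have "0\<^sub>v n \<in> int_kernel A" using A by (auto simp: int_kernel_def intro!: eq_vecI)
  then have "w \<in> int_kernel A" using int_kernel_diff w0(1) A by (simp add: w_def)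
  moreover have "support w = support w0" using wi wc w0c by (auto simp: support_def split: if_splits)
  moreover have "w \<noteq> 0\<^sub>v n" using wi[OF m(1)] m by (auto split: if_splits)
  moreover have "0 < w $ m * z $ m"
    using wi[OF m(1)] m \<open>z $ m \<noteq> 0\<close> by (auto simp: zero_less_mult_iff)
  moreover have "\<forall>i<n. w $ i \<in> {-1, 0, 1}" using w0(3) wi by auto
  ultimately show ?thesis using w0(4,5) m(1) by (intro bexI[of _ w]) auto
qed

text \<open>Subtract the largest multiple of an agreeing circuit that keeps all signs; this strictly
  shrinks the support, and either \<open>z\<close> was that multiple or induction applies.\<close>
lemma tu_conformal_circuit:
  assumes A: "A \<in> carrier_mat d n" and tu: "totally_unimodular A"
  shows "z \<in> int_kernel A \<Longrightarrow> z \<noteq> 0\<^sub>v n \<Longrightarrow>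
    \<exists>v\<in>int_kernel A. v \<noteq> 0\<^sub>v n \<and> v \<sqsubseteq> z \<and> (\<forall>i<n. v $ i \<in> {-1, 0, 1}) \<and> card (support v) \<le> d + 1"
proof (induction "card (support z)" arbitrary: z rule: less_induct)
  case less
  obtain w m where w: "w \<in> int_kernel A" "w \<noteq> 0\<^sub>v n" "\<forall>i<n. w $ i \<in> {-1, 0, 1}"
    "support w \<subseteq> support z" "card (support w) \<le> d + 1" and m: "m < n" "0 < w $ m * z $ m"
    using tu_circuit_agreeing[OF A tu less.prems] by blast
  have wc: "w \<in> carrier_vec n" and zc: "z \<in> carrier_vec n"
    using w(1) less.prems(1) A by (auto simp: int_kernel_def)
  define Agree where "Agree = {i. i < n \<and> 0 < w $ i * z $ i}"
  define t where "t = Min ((\<lambda>i. \<bar>z $ i\<bar>) ` Agree)"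
  have fin: "finite Agree" and "m \<in> Agree" using m by (auto simp: Agree_def)
  then have "t \<in> (\<lambda>i. \<bar>z $ i\<bar>) ` Agree" unfolding t_def by (intro Min_in) auto
  then obtain m' where m': "m' \<in> Agree" "\<bar>z $ m'\<bar> = t" by blast
  have t_le: "t \<le> \<bar>z $ i\<bar>" if "i \<in> Agree" for i unfolding t_def using fin that by simp
  have "1 \<le> t" using m' by (auto simp: Agree_def zero_less_mult_iff)
  define z' where "z' = z - t \<cdot>\<^sub>v w"
  have z'i: "z' $ i = z $ i - t * w $ i" if "i < n" for i using that wc zc by (simp add: z'_def)
  have coord: "z' $ i = 0 \<or> 0 < z' $ i * z $ i" "i \<in> Agree \<Longrightarrow> \<bar>z $ i\<bar> = t \<Longrightarrow> z' $ i = 0"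
    if "i < n" for i
    using unit_shift_coord[of "w $ i" "z $ i" t] w(3,4) wc zc that \<open>1 \<le> t\<close> t_le z'i[OF that]
    by (auto simp: Agree_def support_def)
  have z'k: "z' \<in> int_kernel A" using int_kernel_diff[OF less.prems(1) int_kernel_smult[OF w(1)]]
    by (simp add: z'_def)
  show ?case
  proof (cases "z' = 0\<^sub>v n")
    case True
    then have "z $ i = t * w $ i" if "i < n" for i using z'i[OF that] that by simp
    then have "w \<sqsubseteq> z" using w(3) wc zc \<open>1 \<le> t\<close> by (auto simp: conf_le_def abs_mult)
    then show ?thesis using w by blast
  next
    case False
    have dim: "dim_vec z' = n" using zc wc by (simp add: z'_def)
    have "support z' \<subseteq> support z"
      using coord(1) zc dim by (fastforce simp: support_def)
    moreover have "m' \<in> support z - support z'"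
      using coord(2) m' zc dim by (auto simp: support_def Agree_def)
    ultimately have "support z' \<subset> support z" by blast
    then have "card (support z') < card (support z)" using zc by (intro psubset_card_mono) (auto simp: support_def)
    then obtain v where v: "v \<in> int_kernel A" "v \<noteq> 0\<^sub>v n" "v \<sqsubseteq> z'" "\<forall>i<n. v $ i \<in> {-1, 0, 1}"
      "card (support v) \<le> d + 1" using less.hyps z'k False by blast
    have "0 \<le> v $ i * z $ i \<and> \<bar>v $ i\<bar> \<le> \<bar>z $ i\<bar>" if "i < n" for i
      using unit_conformal_transfer[of "v $ i" "z' $ i" "z $ i"] v(3,4) coord(1)[OF that] that wc zc
      by (auto simp: conf_le_def z'_def)
    then have "v \<sqsubseteq> z" using v(3) wc zc by (auto simp: conf_le_def z'_def)
    then show ?thesis using v by blast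
  qed
qed

lemma norm1_unit_vec:
  assumes "\<forall>i<dim_vec v. v $ i \<in> {-1, 0, 1}"
  shows "norm1 v = int (card (support v))"
proof -
  have "norm1 v = (\<Sum>i\<in>support v. \<bar>v $ i\<bar>)"
    unfolding norm1_def by (intro sum.mono_neutral_right) (auto simp: support_def)
  also have "\<dots> = (\<Sum>i\<in>support v. 1)" using assms by (intro sum.cong) (auto simp: support_def)
  finally show ?thesis by simp
qed

text \<open>Graver basis elements of a totally unimodular \<open>d \<times> n\<close> matrix are \<open>{-1,0,1}\<close>-vectors
  with 1-norm at most \<open>d + 1\<close>: by minimality each equals the conformal circuit below it.\<close>
lemma graver_tu:
  assumes A: "A \<in> carrier_mat d n" and tu: "totally_unimodular A" and g: "g \<in> graver A"
  shows "\<forall>i<n. g $ i \<in> {-1, 0, 1}" and "norm1 g \<le> int d + 1"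
proof -
  have gk: "g \<in> int_kernel A" "g \<noteq> 0\<^sub>v n" using graver_kernel[OF g] A by auto
  obtain v where v: "v \<in> int_kernel A" "v \<noteq> 0\<^sub>v n" "v \<sqsubseteq> g" "\<forall>i<n. v $ i \<in> {-1, 0, 1}"
    "card (support v) \<le> d + 1"
    using tu_conformal_circuit[OF A tu gk] by blast
  then have "v = g" using g A unfolding graver_def by auto
  then show unit: "\<forall>i<n. g $ i \<in> {-1, 0, 1}" using v(4) by simp
  have "dim_vec g = n" using gk(1) A by (simp add: int_kernel_def)
  then show "norm1 g \<le> int d + 1" using norm1_unit_vec[of g] unit v(5) \<open>v = g\<close> by simp
qed

section \<open>Runs of steepest-descent augmentation\<close>

definition sd_witness ::
  "int mat \<Rightarrow> int vec \<Rightarrow> int vec \<Rightarrow> int vec \<Rightarrow> int vec \<Rightarrow> int vec \<Rightarrow> int vec \<Rightarrow> int \<Rightarrow> bool" where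
  "sd_witness A b c u x x' z \<alpha> \<longleftrightarrow> z \<in> graver A \<and> feasible A b u (x + z) \<and>
     (\<forall>z' \<in> graver A. feasible A b u (x + z') \<longrightarrow> ratio c z' \<le> ratio c z) \<and> 0 < ratio c z \<and>
     feasible A b u (x + \<alpha> \<cdot>\<^sub>v z) \<and> (\<forall>\<beta>::int. feasible A b u (x + \<beta> \<cdot>\<^sub>v z) \<longrightarrow> \<beta> \<le> \<alpha>) \<and>
     x' = x + \<alpha> \<cdot>\<^sub>v z"

lemma sd_step_iff: "sd_step A b c u x x' \<longleftrightarrow> (\<exists>z \<alpha>. sd_witness A b c u x x' z \<alpha>)"
  unfolding sd_step_def sd_witness_def by blast

lemma tight_opposite_coord:
  fixes s a e D y :: int
  assumes "s \<in> {-1, 1}" "1 \<le> a" "\<bar>e\<bar> \<le> D" "\<bar>s * a + e + y\<bar> = a + D + \<bar>y\<bar>" "s * (e + y) \<le> 0"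
  shows "y = 0"
  using assms by (auto simp: abs_if split: if_splits)

locale sd_run =
  fixes A :: "int mat" and b c u :: "int vec" and d n N :: nat
    and xs z :: "nat \<Rightarrow> int vec" and \<alpha> :: "nat \<Rightarrow> int"
  assumes A: "A \<in> carrier_mat d n" and c: "c \<in> carrier_vec n"
    and start: "feasible A b u (xs 0)"
    and step: "\<And>k. k < N \<Longrightarrow> sd_witness A b c u (xs k) (xs (Suc k)) (z k) (\<alpha> k)"
begin

definition rate :: "nat \<Rightarrow> real" where
  "rate k = ratio c (z k)"

lemma step_dir:
  assumes "k < N"
  shows "z k \<in> graver A" and "feasible A b u (xs k + z k)"
    and "\<And>g. g \<in> graver A \<Longrightarrow> feasible A b u (xs k + g) \<Longrightarrow> ratio c g \<le> rate k"
    and "0 < rate k"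
    and "\<And>\<beta>. feasible A b u (xs k + \<beta> \<cdot>\<^sub>v z k) \<Longrightarrow> \<beta> \<le> \<alpha> k"
    and "xs (Suc k) = xs k + \<alpha> k \<cdot>\<^sub>v z k"
  using step[OF assms] by (auto simp: sd_witness_def rate_def)

lemma dir_kernel:
  assumes "k < N"
  shows "z k \<in> carrier_vec n" "A *\<^sub>v z k = 0\<^sub>v d" "0 < norm1 (z k)"
  using graver_kernel[OF step_dir(1)[OF assms]] A by (auto simp: int_kernel_def)

lemma feasible_iterate: "k \<le> N \<Longrightarrow> feasible A b u (xs k)"
proof (induction k)
  case 0
  then show ?case using start by simp
next
  case (Suc k)
  then show ?case using step[of k] by (auto simp: sd_witness_def)
qed

lemma iterate_carrier: "k \<le> N \<Longrightarrow> xs k \<in> carrier_vec n"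
  using feasible_iterate A by (auto simp: feasible_def)

text \<open>The step length is positive, since the unit step along \<open>z k\<close> is feasible.\<close>
lemma step_length_pos: "k < N \<Longrightarrow> 1 \<le> \<alpha> k"
  using step_dir(2,5)[of k] by simp

lemma rate_cost: "k < N \<Longrightarrow> - real_of_int (c \<bullet> z k) = rate k * real_of_int (norm1 (z k))"
  using dir_kernel(3)[of k] by (simp add: rate_def ratio_def)

text \<open>Steepness against all kernel directions: any feasible move \<open>w\<close> from the \<open>k\<close>-th iterate
  gains at most \<open>rate k\<close> per unit of 1-norm, since every Graver element conformal to \<open>w\<close>
  is itself a feasible candidate.\<close>
lemma steepest_bound:
  assumes k: "k < N" and w: "w \<in> int_kernel A" and fw: "feasible A b u (xs k + w)"
  shows "- real_of_int (c \<bullet> w) \<le> rate k * real_of_int (norm1 w)"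
proof (rule graver_ratio_bound[OF w])
  show "c \<in> carrier_vec (dim_col A)" using c A by simp
  fix g assume g: "g \<in> graver A" "g \<sqsubseteq> w"
  have "feasible A b u (xs k + g)"
    using feasible_conformal[OF feasible_iterate _ g(2) graver_kernel(1)[OF g(1)]] fw k by simp
  then have "ratio c g \<le> rate k" using step_dir(3)[OF k g(1)] by simp
  moreover have "- real_of_int (c \<bullet> g) = ratio c g * real_of_int (norm1 g)"
    using graver_kernel(3)[OF g(1)] by (simp add: ratio_def)
  ultimately show "- real_of_int (c \<bullet> g) \<le> rate k * real_of_int (norm1 g)"
    using graver_kernel(3)[OF g(1)] by (simp add: mult_right_mono)
qed

text \<open>The steepness ratios never increase: the combined move \<open>\<alpha>_k z_k + z_{k+1}\<close> is feasible from
  the \<open>k\<close>-th iterate, so it gains at most \<open>rate k\<close> per unit of 1-norm.\<close>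
lemma rate_Suc_le:
  assumes k: "Suc k < N"
  shows "rate (Suc k) \<le> rate k"
proof -
  have k0: "k < N" using k by simp
  define w where "w = \<alpha> k \<cdot>\<^sub>v z k + z (Suc k)"
  have zc: "z k \<in> carrier_vec n" "z (Suc k) \<in> carrier_vec n" using dir_kernel k k0 by auto
  have "w \<in> int_kernel A"
    using int_kernel_add[OF int_kernel_smult[OF graver_kernel(1)[OF step_dir(1)[OF k0]]]
        graver_kernel(1)[OF step_dir(1)[OF k]]] by (simp add: w_def)
  moreover have "xs k + w = xs (Suc k) + z (Suc k)"
    using step_dir(6)[OF k0] zc iterate_carrier[of k] k by (intro eq_vecI) (auto simp: w_def)
  ultimately have steep: "- real_of_int (c \<bullet> w) \<le> rate k * real_of_int (norm1 w)"
    using steepest_bound[OF k0] step_dir(2)[OF k] by simp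
  have "c \<bullet> w = \<alpha> k * (c \<bullet> z k) + c \<bullet> z (Suc k)"
    using zc c by (simp add: w_def scalar_prod_add_distrib[of _ n])
  then have "real_of_int (\<alpha> k) * (rate k * real_of_int (norm1 (z k))) +
      rate (Suc k) * real_of_int (norm1 (z (Suc k))) = - real_of_int (c \<bullet> w)"
  proof -
    have "real_of_int (c \<bullet> z k) = - (rate k * real_of_int (norm1 (z k)))"
      "real_of_int (c \<bullet> z (Suc k)) = - (rate (Suc k) * real_of_int (norm1 (z (Suc k))))"
      using rate_cost[OF k0] rate_cost[OF k] by linarith+
    then show ?thesis using \<open>c \<bullet> w = _\<close> by simp
  qed
  also have "\<dots> \<le> rate k * real_of_int (norm1 w)" by (fact steep)
  also have "\<dots> \<le> rate k * (real_of_int (\<alpha> k) * real_of_int (norm1 (z k)) + real_of_int (norm1 (z (Suc k))))"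
  proof -
    have "norm1 w \<le> \<alpha> k * norm1 (z k) + norm1 (z (Suc k))"
      using norm1_add_le[of "\<alpha> k \<cdot>\<^sub>v z k" "z (Suc k)"] zc step_length_pos[OF k0]
      by (simp add: w_def norm1_smult)
    then show ?thesis using step_dir(4)[OF k0] by (intro mult_left_mono) (simp_all flip: of_int_mult of_int_add)
  qed
  finally have "rate (Suc k) * real_of_int (norm1 (z (Suc k))) \<le> rate k * real_of_int (norm1 (z (Suc k)))"
    by (simp add: algebra_simps)
  then show ?thesis using dir_kernel(3)[OF k] by simp
qed

lemma rate_antimono: "k \<le> l \<Longrightarrow> l < N \<Longrightarrow> rate l \<le> rate k"
proof (induction l rule: dec_induct)
  case (step m)
  then show ?case using rate_Suc_le[of m] by simp
qed simp

lemma iterate_coord: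
  assumes "k \<le> m" "m \<le> N" "i < n"
  shows "xs m $ i = xs k $ i + (\<Sum>j\<in>{k..<m}. \<alpha> j * z j $ i)"
  using assms(1,2)
proof (induction m rule: dec_induct)
  case (step m)
  then have "xs (Suc m) $ i = xs m $ i + \<alpha> m * z m $ i"
    using step_dir(6)[of m] dir_kernel(1)[of m] iterate_carrier[of m] assms(3) by simp
  then show ?case using step by simp
qed simp

lemma iterate_cost:
  assumes "k \<le> m" "m \<le> N"
  shows "c \<bullet> xs m = c \<bullet> xs k + (\<Sum>j\<in>{k..<m}. \<alpha> j * (c \<bullet> z j))"
  using assms
proof (induction m rule: dec_induct)
  case (step m)
  then have "c \<bullet> xs (Suc m) = c \<bullet> xs m + \<alpha> m * (c \<bullet> z m)"
    using step_dir(6)[of m] dir_kernel(1)[of m] iterate_carrier[of m] c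
    by (simp add: scalar_prod_add_distrib[of _ n])
  then show ?case using step by simp
qed simp

lemma iterate_displacement:
  assumes "k \<le> m" "m \<le> N" "i < n"
  shows "\<bar>xs m $ i - xs k $ i\<bar> \<le> (\<Sum>j\<in>{k..<m}. \<alpha> j * \<bar>z j $ i\<bar>)"
proof -
  have "\<bar>xs m $ i - xs k $ i\<bar> \<le> (\<Sum>j\<in>{k..<m}. \<bar>\<alpha> j * z j $ i\<bar>)"
    using iterate_coord[OF assms] sum_abs by simp
  also have "\<dots> = (\<Sum>j\<in>{k..<m}. \<alpha> j * \<bar>z j $ i\<bar>)"
  proof (rule sum.cong[OF refl])
    fix j assume "j \<in> {k..<m}"
    then have "1 \<le> \<alpha> j" using step_length_pos assms(2) by simp
    then show "\<bar>\<alpha> j * z j $ i\<bar> = \<alpha> j * \<bar>z j $ i\<bar>" by (simp add: abs_mult)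
  qed
  finally show ?thesis .
qed

definition block_move :: "nat \<Rightarrow> nat \<Rightarrow> int vec" where
  "block_move k l = xs l + z l - xs k"

lemma block_move_feasible:
  assumes "k \<le> l" "l < N"
  shows "block_move k l \<in> int_kernel A" and "feasible A b u (xs k + block_move k l)"
proof -
  have "xs k + block_move k l = xs l + z l"
    using assms iterate_carrier[of k] iterate_carrier[of l] dir_kernel(1)[of l]
    by (intro eq_vecI) (auto simp: block_move_def)
  then show "feasible A b u (xs k + block_move k l)" using step_dir(2) assms by simp
  show "block_move k l \<in> int_kernel A"
    using feasible_diff_kernel[OF feasible_iterate step_dir(2)] assms by (simp add: block_move_def)
qed

text \<open>If the ratio does not drop between iterations \<open>k\<close> and \<open>l\<close>, the block move realises the
  ratio \<open>rate k\<close> on the 1-norm it would have without cancellation.\<close>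
lemma block_cost:
  assumes kl: "k \<le> l" "l < N" and same: "rate l = rate k"
  shows "- real_of_int (c \<bullet> block_move k l)
    = rate k * real_of_int ((\<Sum>j\<in>{k..<l}. \<alpha> j * norm1 (z j)) + norm1 (z l))"
proof -
  have rate_j: "rate j = rate k" if "k \<le> j" "j \<le> l" for j
    using rate_antimono[of k j] rate_antimono[of j l] that kl same by simp
  have "c \<bullet> block_move k l = c \<bullet> xs l + c \<bullet> z l - c \<bullet> xs k"
    using kl iterate_carrier[of k] iterate_carrier[of l] dir_kernel(1)[of l] c
    by (simp add: block_move_def scalar_prod_minus_distrib[of _ n] scalar_prod_add_distrib[of _ n])
  also have "\<dots> = (\<Sum>j\<in>{k..<l}. \<alpha> j * (c \<bullet> z j)) + c \<bullet> z l" using iterate_cost[of k l] kl by simp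
  finally have "- real_of_int (c \<bullet> block_move k l)
      = (\<Sum>j\<in>{k..<l}. real_of_int (\<alpha> j) * (- real_of_int (c \<bullet> z j))) + - real_of_int (c \<bullet> z l)"
    by (simp add: sum_negf)
  also have "\<dots> = (\<Sum>j\<in>{k..<l}. real_of_int (\<alpha> j) * (rate k * real_of_int (norm1 (z j))))
      + rate k * real_of_int (norm1 (z l))"
  proof -
    have "(\<Sum>j\<in>{k..<l}. real_of_int (\<alpha> j) * (- real_of_int (c \<bullet> z j)))
        = (\<Sum>j\<in>{k..<l}. real_of_int (\<alpha> j) * (rate k * real_of_int (norm1 (z j))))"
    proof (rule sum.cong[OF refl])
      fix j assume "j \<in> {k..<l}"
      then show "real_of_int (\<alpha> j) * (- real_of_int (c \<bullet> z j))
          = real_of_int (\<alpha> j) * (rate k * real_of_int (norm1 (z j)))"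
        using rate_cost[of j] rate_j[of j] kl by simp
    qed
    moreover have "- real_of_int (c \<bullet> z l) = rate k * real_of_int (norm1 (z l))"
      using rate_cost[of l] kl same by simp
    ultimately show ?thesis by simp
  qed
  also have "\<dots> = rate k * ((\<Sum>j\<in>{k..<l}. real_of_int (\<alpha> j) * real_of_int (norm1 (z j)))
      + real_of_int (norm1 (z l)))"
    by (simp add: distrib_left sum_distrib_left mult.left_commute)
  finally show ?thesis by simp
qed

text \<open>Combined with steepness at step \<open>k\<close>, the block move has at least that 1-norm.\<close>
lemma block_norm_lower:
  assumes kl: "k \<le> l" "l < N" and same: "rate l = rate k"
  shows "(\<Sum>j\<in>{k..<l}. \<alpha> j * norm1 (z j)) + norm1 (z l) \<le> norm1 (block_move k l)"
proof -
  have "rate k * real_of_int ((\<Sum>j\<in>{k..<l}. \<alpha> j * norm1 (z j)) + norm1 (z l))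
      \<le> rate k * real_of_int (norm1 (block_move k l))"
    using steepest_bound[OF _ block_move_feasible[OF kl]] block_cost[OF kl same] kl by simp
  then have "real_of_int ((\<Sum>j\<in>{k..<l}. \<alpha> j * norm1 (z j)) + norm1 (z l))
      \<le> real_of_int (norm1 (block_move k l))"
    using step_dir(4)[of k] kl by (simp only: mult_le_cancel_left_pos)
  then show ?thesis by (simp only: of_int_le_iff)
qed

text \<open>Hence no cancellation happens in any coordinate of the block move: the triangle inequality
  for its coordinates is tight.\<close>
lemma block_coord_tight:
  assumes kl: "k \<le> l" "l < N" and same: "rate l = rate k" and i: "i < n"
  shows "\<bar>block_move k l $ i\<bar> = (\<Sum>j\<in>{k..<l}. \<alpha> j * \<bar>z j $ i\<bar>) + \<bar>z l $ i\<bar>"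
proof -
  define D where "D i' = (\<Sum>j\<in>{k..<l}. \<alpha> j * \<bar>z j $ i'\<bar>) + \<bar>z l $ i'\<bar>" for i'
  have coord: "block_move k l $ i' = (xs l $ i' - xs k $ i') + z l $ i'" if "i' < n" for i'
    using that kl iterate_carrier[of k] iterate_carrier[of l] dir_kernel(1)[of l]
    by (simp add: block_move_def)
  have le: "\<bar>block_move k l $ i'\<bar> \<le> D i'" if "i' < n" for i'
    using coord[OF that] iterate_displacement[of k l i'] kl that unfolding D_def by linarith
  have "(\<Sum>i'<n. D i') = (\<Sum>j\<in>{k..<l}. \<alpha> j * norm1 (z j)) + norm1 (z l)"
  proof -
    have "(\<Sum>i'<n. \<Sum>j\<in>{k..<l}. \<alpha> j * \<bar>z j $ i'\<bar>) = (\<Sum>j\<in>{k..<l}. \<Sum>i'<n. \<alpha> j * \<bar>z j $ i'\<bar>)"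
      by (rule sum.swap)
    also have "\<dots> = (\<Sum>j\<in>{k..<l}. \<alpha> j * norm1 (z j))"
    proof (rule sum.cong[OF refl])
      fix j assume "j \<in> {k..<l}"
      then have "dim_vec (z j) = n" using dir_kernel(1)[of j] kl by simp
      then show "(\<Sum>i'<n. \<alpha> j * \<bar>z j $ i'\<bar>) = \<alpha> j * norm1 (z j)"
        by (simp add: norm1_def sum_distrib_left)
    qed
    finally show ?thesis using dir_kernel(1)[of l] kl by (simp add: D_def sum.distrib norm1_def)
  qed
  also have "\<dots> \<le> norm1 (block_move k l)" by (rule block_norm_lower[OF kl same])
  also have "\<dots> = (\<Sum>i'<n. \<bar>block_move k l $ i'\<bar>)"
    using kl iterate_carrier[of k] iterate_carrier[of l] dir_kernel(1)[of l]
    by (simp add: norm1_def block_move_def)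
  finally have "(\<Sum>i'<n. \<bar>block_move k l $ i'\<bar>) = (\<Sum>i'<n. D i')"
    using le sum_mono[of "{..<n}" "\<lambda>i'. \<bar>block_move k l $ i'\<bar>" D] by fastforce
  then show ?thesis using sum_mono_inv[of "\<lambda>i'. \<bar>block_move k l $ i'\<bar>" "{..<n}" D i] le i
    by (simp add: D_def)
qed

definition saturated :: "nat \<Rightarrow> nat \<Rightarrow> bool" where
  "saturated k i \<longleftrightarrow> (z k $ i = 1 \<and> xs (Suc k) $ i = u $ i) \<or> (z k $ i = -1 \<and> xs (Suc k) $ i = 0)"

text \<open>A coordinate saturated at step \<open>k\<close> is not moved again while the ratio stays at
  \<open>rate k\<close>: moving it would make the block move cancel in that coordinate.\<close>
lemma saturated_not_reused:
  assumes kl: "k < l" "l < N" and same: "rate l = rate k" and i: "i < n" and sat: "saturated k i"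
  shows "z l $ i = 0"
proof -
  define e where "e = xs l $ i - xs (Suc k) $ i"
  define D where "D = (\<Sum>j\<in>{Suc k..<l}. \<alpha> j * \<bar>z j $ i\<bar>)"
  have "\<bar>block_move k l $ i\<bar> = \<alpha> k * \<bar>z k $ i\<bar> + D + \<bar>z l $ i\<bar>"
    using block_coord_tight[of k l i] kl same i by (simp add: sum.atLeast_Suc_lessThan D_def)
  moreover have "block_move k l $ i = z k $ i * \<alpha> k + e + z l $ i"
    using kl i iterate_carrier[of k] iterate_carrier[of l] dir_kernel(1)[of l]
      iterate_coord[of k "Suc k" i] by (simp add: block_move_def e_def)
  moreover have "\<bar>e\<bar> \<le> D" using iterate_displacement[of "Suc k" l i] kl i by (simp add: e_def D_def)
  moreover have "0 \<le> xs l $ i + z l $ i" "xs l $ i + z l $ i \<le> u $ i"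
    using step_dir(2)[of l] kl i iterate_carrier[of l] dir_kernel(1)[of l] A
    by (auto simp: feasible_def)
  moreover have "1 \<le> \<alpha> k" using step_length_pos kl by simp
  ultimately show ?thesis
    using sat tight_opposite_coord[of "z k $ i" "\<alpha> k" e D "z l $ i"]
    by (auto simp: saturated_def e_def)
qed

end

locale tu_sd_run = sd_run +
  assumes tu: "totally_unimodular A"
begin

lemma dir_unit: "k < N \<Longrightarrow> i < n \<Longrightarrow> z k $ i \<in> {-1, 0, 1}"
  using graver_tu(1)[OF A tu step_dir(1)] by blast

lemma dir_norm: "k < N \<Longrightarrow> norm1 (z k) \<le> int d + 1"
  using graver_tu(2)[OF A tu step_dir(1)] by blast

text \<open>Every step saturates some coordinate; otherwise one more unit step along \<open>z k\<close> would be
  feasible, contradicting the maximality of the step length.\<close>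
lemma step_saturates:
  assumes k: "k < N"
  shows "\<exists>i<n. saturated k i"
proof (rule ccontr)
  assume none: "\<not> (\<exists>i<n. saturated k i)"
  have xc: "xs (Suc k) \<in> carrier_vec n" and zc: "z k \<in> carrier_vec n"
    using iterate_carrier dir_kernel k by auto
  have fx: "feasible A b u (xs (Suc k))" using feasible_iterate k by simp
  have "A *\<^sub>v (xs (Suc k) + z k) = A *\<^sub>v xs (Suc k) + A *\<^sub>v z k"
    using A xc zc by (intro mult_add_distrib_mat_vec) auto
  then have "A *\<^sub>v (xs (Suc k) + z k) = b" using fx dir_kernel(2)[OF k] A by (auto simp: feasible_def)
  moreover have "0 \<le> xs (Suc k) $ i + z k $ i \<and> xs (Suc k) $ i + z k $ i \<le> u $ i" if i: "i < n" for i
  proof -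
    have "0 \<le> xs (Suc k) $ i" "xs (Suc k) $ i \<le> u $ i" using fx i A by (auto simp: feasible_def)
    then show ?thesis using dir_unit[OF k i] none i by (auto simp: saturated_def)
  qed
  ultimately have "feasible A b u (xs (Suc k) + z k)" using xc zc A by (auto simp: feasible_def)
  moreover have "xs (Suc k) + z k = xs k + (\<alpha> k + 1) \<cdot>\<^sub>v z k"
    using step_dir(6)[OF k] zc iterate_carrier[of k] k by (intro eq_vecI) (auto simp: algebra_simps)
  ultimately show False using step_dir(5)[OF k, of "\<alpha> k + 1"] by simp
qed

lemma rate_fraction:
  assumes k: "k < N"
  shows "rate k \<in> (\<lambda>(p, q). real_of_int p / real_of_int q) ` ({1..norm1 c} \<times> {1..int d + 1})"
proof -
  have zc: "z k \<in> carrier_vec n" and q: "0 < norm1 (z k)" using dir_kernel k by auto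
  have rate: "rate k = real_of_int (- (c \<bullet> z k)) / real_of_int (norm1 (z k))"
    by (simp add: rate_def ratio_def)
  then have "0 < real_of_int (- (c \<bullet> z k))"
    using step_dir(4)[OF k] q by (simp add: zero_less_divide_iff divide_less_0_iff)
  then have "0 < - (c \<bullet> z k)" by simp
  moreover have "- (c \<bullet> z k) \<le> norm1 c"
  proof -
    have "- (c \<bullet> z k) = (\<Sum>i<n. - (c $ i * z k $ i))"
      using zc by (simp add: scalar_prod_def sum_negf lessThan_atLeast0)
    also have "\<dots> \<le> (\<Sum>i<n. \<bar>c $ i\<bar>)"
      using dir_unit[OF k] by (intro sum_mono) fastforce
    finally show ?thesis using c by (simp add: norm1_def)
  qed
  ultimately show ?thesis using q dir_norm[OF k] unfolding rate
    by (intro image_eqI[of _ _ "(- (c \<bullet> z k), norm1 (z k))"]) auto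
qed

text \<open>Counting: the pair (ratio, saturated coordinate) determines the step, since equal ratios
  of two steps force the later one to leave the earlier saturated coordinate untouched.\<close>
lemma iteration_bound: "int N \<le> int n * (int d + 1) * norm1 c"
proof -
  obtain sat where sat: "\<And>k. k < N \<Longrightarrow> sat k < n \<and> saturated k (sat k)"
    using step_saturates by metis
  define key where "key k = (rate k, sat k)" for k
  define R where "R = (\<lambda>(p, q). real_of_int p / real_of_int q) ` ({1..norm1 c} \<times> {1..int d + 1})"
  have distinct: "key k \<noteq> key l" if "k < l" "l < N" for k l
  proof
    assume "key k = key l"
    then have "rate l = rate k" "sat l = sat k" by (auto simp: key_def)
    then have "z l $ sat k = 0" using saturated_not_reused[of k l "sat k"] sat that by simp
    then show False using sat[of l] \<open>sat l = sat k\<close> that by (auto simp: saturated_def)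
  qed
  have "inj_on key {..<N}"
    by (rule inj_onI) (metis distinct lessThan_iff linorder_neqE_nat)
  then have "N = card (key ` {..<N})" by (simp add: card_image)
  also have "\<dots> \<le> card (R \<times> {..<n})"
    using rate_fraction sat by (intro card_mono) (auto simp: R_def key_def)
  also have "\<dots> \<le> card ({1..norm1 c} \<times> {1..int d + 1}) * n"
  proof -
    have "card R \<le> card ({1..norm1 c} \<times> {1..int d + 1})" unfolding R_def by (intro card_image_le) auto
    then show ?thesis by (simp add: card_cartesian_product)
  qed
  also have "\<dots> = nat (norm1 c) * (d + 1) * n" by (simp add: card_cartesian_product nat_add_distrib)
  finally have "int N \<le> int (nat (norm1 c) * (d + 1) * n)" by (simp only: of_nat_le_iff)
  also have "\<dots> = int n * (int d + 1) * norm1 c" using norm1_nonneg[of c] by (simp add: algebra_simps)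
  finally show ?thesis .
qed

end

theorem corollary4:
  fixes A :: "int mat" and b c u :: "int vec" and d n N :: nat and xs :: "nat \<Rightarrow> int vec"
  assumes "A \<in> carrier_mat d n"
    and "totally_unimodular A"
    and "b \<in> carrier_vec d" and "c \<in> carrier_vec n" and "u \<in> carrier_vec n"
    and "\<forall>i<n. 0 \<le> u $ i"
    and "feasible A b u (xs 0)"
    and "\<forall>k<N. sd_step A b c u (xs k) (xs (Suc k))"
  shows "int N \<le> int n * (int d + 1) * norm1 c \<and>
         (sd_stops A b c u (xs N) \<longrightarrow> optimal A b c u (xs N))"
proof -
  obtain z \<alpha> where witness: "\<And>k. k < N \<Longrightarrow> sd_witness A b c u (xs k) (xs (Suc k)) (z k) (\<alpha> k)"
    using assms(8) unfolding sd_step_iff by metis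
  interpret run: tu_sd_run A b c u d n N xs z \<alpha>
    using assms witness by unfold_locales auto
  have "sd_stops A b c u (xs N) \<longrightarrow> optimal A b c u (xs N)"
    using stops_imp_optimal[OF run.feasible_iterate[OF order_refl]] assms(1,4) by auto
  then show ?thesis using run.iteration_bound by blast
qed

end
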